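(* Let ${\bf A}=(a(i,j))_{1\le i,j\le n}$ be a real $n\times n$ matrix with no zero row, and let ${\bf A}_{\rm sde}$ and $|\tilde{\bf A}|$ be the matrices associated with ${\bf A}$ as defined below. Then for every nonzero complex number $\lambda$, the algebraic multiplicity of $\lambda$ as an eigenvalue of ${\bf A}_{\rm sde}$ equals the algebraic multiplicity of $\lambda$ as an eigenvalue of $|\tilde{\bf A}|$ (with multiplicity $0$ meaning $\lambda$ is not an eigenvalue).
   Context: For a real number $t$, $t_+=\max(t,0)$. Define $w_i=\big(\sum_{j=1}^n |a(i,j)|\big)^{-1}$, $1\le i\le n$, and $\tilde a(i,j)=w_i\,a(i,j)$. Let $|\tilde{\bf A}|=(|\tilde a(i,j)|)_{1\le i,j\le n}$ (an $n\times n$ row stochastic matrix), $\tilde{\bf A}_+=\big((\tilde a(i,j))_+\big)_{i,j}$, $\tilde{\bf A}_-=\big((-\tilde a(i,j))_+\big)_{i,j}$, and $${\bf A}_{\rm sde}=\begin{pmatrix}\tilde{\bf A}_+ & \tilde{\bf A}_-\\ \tilde{\bf A}_+ & \tilde{\bf A}_-\end{pmatrix}\in\mathbb{R}^{2n\times 2n}.$$ *)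

theory Defs
  imports "Jordan_Normal_Form.Matrix" "Jordan_Normal_Form.Char_Poly"
begin

definition row_weight :: "real mat \<Rightarrow> nat \<Rightarrow> real" where
  "row_weight A i = inverse (\<Sum>j<dim_col A. \<bar>A $$ (i,j)\<bar>)"

definition tilde_mat :: "real mat \<Rightarrow> real mat" where
  "tilde_mat A = mat (dim_row A) (dim_col A) (\<lambda>(i,j). row_weight A i * A $$ (i,j))"

definition abs_tilde_mat :: "real mat \<Rightarrow> real mat" where
  "abs_tilde_mat A = map_mat abs (tilde_mat A)"

definition tilde_pos :: "real mat \<Rightarrow> real mat" where
  "tilde_pos A = map_mat (\<lambda>t. max t 0) (tilde_mat A)"

definition tilde_neg :: "real mat \<Rightarrow> real mat" where
  "tilde_neg A = map_mat (\<lambda>t. max (- t) 0) (tilde_mat A)"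

definition A_sde :: "real mat \<Rightarrow> real mat" where
  "A_sde A = four_block_mat (tilde_pos A) (tilde_neg A) (tilde_pos A) (tilde_neg A)"

definition alg_mult :: "complex mat \<Rightarrow> complex \<Rightarrow> nat" where
  "alg_mult M x = order x (char_poly M)"

end

theory Submission
  imports Defs
begin

text \<open>Conjugating \<open>[[P, N], [P, N]]\<close> by \<open>[[I, 0], [I, I]]\<close> gives the block upper triangular
  matrix \<open>[[P + N, N], [0, 0]]\<close>, so the characteristic polynomial of \<open>A_sde\<close> is \<open>x\<^sup>n\<close>
  times that of \<open>tilde_pos A + tilde_neg A = abs_tilde_mat A\<close>, and the factor \<open>x\<^sup>n\<close>
  only affects the eigenvalue \<open>0\<close>.\<close>

lemma char_poly_zero_mat: "char_poly (0\<^sub>m n n :: 'a::field mat) = [:0, 1:] ^ n"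
proof -
  have "diag_mat (0\<^sub>m n n :: 'a mat) = replicate n 0"
    by (intro nth_equalityI) (auto simp: diag_mat_def)
  then show ?thesis by (simp add: char_poly_upper_triangular[of "0\<^sub>m n n" n] prod_list_replicate)
qed

lemma char_poly_four_block_mat_lower_left_zero:
  fixes A1 :: "'a :: idom mat"
  assumes "A1 \<in> carrier_mat n n" "A2 \<in> carrier_mat n m" "A4 \<in> carrier_mat m m"
  shows "char_poly (four_block_mat A1 A2 (0\<^sub>m m n) A4) = char_poly A1 * char_poly A4"
proof -
  have "char_poly_matrix (four_block_mat A1 A2 (0\<^sub>m m n) A4) =
    four_block_mat (char_poly_matrix A1) (map_mat (\<lambda>a. [:- a:]) A2) (0\<^sub>m m n) (char_poly_matrix A4)"
    using assms by (intro eq_matI) (auto simp: char_poly_matrix_def)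
  then show ?thesis
    using assms unfolding char_poly_def
    by (simp add: det_four_block_mat_lower_left_zero[OF char_poly_matrix_closed _ refl char_poly_matrix_closed])
qed

lemma similar_four_block_mat_repeated_rows:
  fixes P N :: "'a :: comm_ring_1 mat"
  assumes P: "P \<in> carrier_mat n n" and N: "N \<in> carrier_mat n n"
  shows "similar_mat (four_block_mat (P + N) N (0\<^sub>m n n) (0\<^sub>m n n)) (four_block_mat P N P N)"
proof -
  define S :: "'a mat" where "S = four_block_mat (1\<^sub>m n) (0\<^sub>m n n) (1\<^sub>m n) (1\<^sub>m n)"
  define S' :: "'a mat" where "S' = four_block_mat (1\<^sub>m n) (0\<^sub>m n n) (- 1\<^sub>m n) (1\<^sub>m n)"
  have carrier: "S \<in> carrier_mat (n + n) (n + n)" "S' \<in> carrier_mat (n + n) (n + n)"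
    "four_block_mat P N P N \<in> carrier_mat (n + n) (n + n)"
    using P N by (auto simp: S_def S'_def)
  have S_S': "S * S' = 1\<^sub>m (n + n)"
    unfolding S_def S'_def by (subst mult_four_block_mat[of _ n n], auto, (rule eq_matI, auto)+)
  have S'_S: "S' * S = 1\<^sub>m (n + n)"
    unfolding S_def S'_def by (subst mult_four_block_mat[of _ n n], auto, (rule eq_matI, auto)+)
  have MS: "four_block_mat P N P N * S = four_block_mat (P + N) N (P + N) N"
    unfolding S_def using P N by (subst mult_four_block_mat[of _ n n], auto)
  have "S' * four_block_mat P N P N * S = S' * (four_block_mat P N P N * S)"
    using carrier by (intro assoc_mult_mat)
  also have "\<dots> = four_block_mat (P + N) N (0\<^sub>m n n) (0\<^sub>m n n)"
    unfolding MS S'_def using P N by (subst mult_four_block_mat[of _ n n], auto)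
  finally have conjugate: "four_block_mat (P + N) N (0\<^sub>m n n) (0\<^sub>m n n) = S' * four_block_mat P N P N * S" ..
  show ?thesis
    by (rule similar_matI[OF _ S'_S S_S' conjugate]) (use carrier P N in auto)
qed

lemma char_poly_four_block_mat_repeated_rows:
  fixes P N :: "'a :: field mat"
  assumes "P \<in> carrier_mat n n" "N \<in> carrier_mat n n"
  shows "char_poly (four_block_mat P N P N) = char_poly (P + N) * [:0, 1:] ^ n"
proof -
  have "char_poly (four_block_mat P N P N) = char_poly (four_block_mat (P + N) N (0\<^sub>m n n) (0\<^sub>m n n))"
    using assms by (intro char_poly_similar[symmetric] similar_four_block_mat_repeated_rows)
  also have "\<dots> = char_poly (P + N) * [:0, 1:] ^ n"
    using assms by (simp add: char_poly_four_block_mat_lower_left_zero[of _ n _ n] char_poly_zero_mat)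
  finally show ?thesis .
qed

lemma order_mult_X_power:
  fixes p :: "'a :: idom poly"
  assumes "x \<noteq> 0" "p \<noteq> 0"
  shows "order x (p * [:0, 1:] ^ n) = order x p"
  using assms by (simp add: order_mult order_0I)

lemma tilde_pos_add_tilde_neg: "tilde_pos A + tilde_neg A = abs_tilde_mat A"
  by (intro eq_matI) (auto simp: tilde_pos_def tilde_neg_def abs_tilde_mat_def max_def)

theorem proposition2:
  fixes A :: "real mat" and n :: nat
  assumes "A \<in> carrier_mat n n"
    and "\<forall>i<n. \<exists>j<n. A $$ (i,j) \<noteq> 0"
  shows "\<forall>x::complex. x \<noteq> 0 \<longrightarrow>
    alg_mult (map_mat complex_of_real (A_sde A)) x =
    alg_mult (map_mat complex_of_real (abs_tilde_mat A)) x"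
proof (intro allI impI)
  fix x :: complex
  assume "x \<noteq> 0"
  define P where "P = map_mat complex_of_real (tilde_pos A)"
  define N where "N = map_mat complex_of_real (tilde_neg A)"
  have PN: "P \<in> carrier_mat n n" "N \<in> carrier_mat n n"
    using assms(1) by (auto simp: P_def N_def tilde_pos_def tilde_neg_def tilde_mat_def)
  have "map_mat complex_of_real (A_sde A) = four_block_mat P N P N"
    using PN unfolding A_sde_def P_def N_def by (simp add: map_four_block_mat[of _ n n])
  moreover have "map_mat complex_of_real (abs_tilde_mat A) = P + N"
    using PN unfolding P_def N_def tilde_pos_add_tilde_neg[symmetric] by (intro eq_matI) auto
  moreover have "char_poly (P + N) \<noteq> 0"
    using degree_monic_char_poly[of "P + N" n] PN by auto
  ultimately show "alg_mult (map_mat complex_of_real (A_sde A)) x =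
    alg_mult (map_mat complex_of_real (abs_tilde_mat A)) x"
    using \<open>x \<noteq> 0\<close> PN
    by (simp add: alg_mult_def char_poly_four_block_mat_repeated_rows order_mult_X_power)
qed

end
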